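(* Let $\lambda>-1/2$, $\lambda\ne0$, $M,N\ge0$ integers, $a_0,\dots,a_M\in\mathbb{R}$, and $f_M(x)=\sum_{m=0}^M a_mC^{(\lambda)}_m(x)$. For $0\le n\le N$ and $y\in[-1,1]$ write $\int_{-1}^{y}f_M(y-1-t)C^{(\lambda)}_n(t)\,\mathrm{d}t=\sum_{k=0}^{M+N+1}R^{(\lambda)}_{k,n}C^{(\lambda)}_k(y)$. Then for all integers $k,n$ with $M+1\le k,n\le N$, $$R^{(\lambda)}_{k,n}=(-1)^{k+n}\frac{k+\lambda}{n+\lambda}R^{(\lambda)}_{n,k}.$$
   Context: Gegenbauer polynomials $C^{(\lambda)}_n$ ($\lambda>-1/2$, $\lambda\ne0$) are defined by $C^{(\lambda)}_{-1}=0$, $C^{(\lambda)}_0=1$, $2(n+\lambda)xC^{(\lambda)}_n(x)=(n+1)C^{(\lambda)}_{n+1}(x)+(n+2\lambda-1)C^{(\lambda)}_{n-1}(x)$. *)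

theory Defs
  imports "HOL-Analysis.Analysis"
begin

text \<open>Gegenbauer polynomials C^(lambda)_n(x), via the three-term recurrence
  2(n+lambda) x C_n = (n+1) C_(n+1) + (n+2lambda-1) C_(n-1), C_(-1) = 0, C_0 = 1.\<close>
fun gegenbauer :: "real \<Rightarrow> nat \<Rightarrow> real \<Rightarrow> real" where
  "gegenbauer lam 0 x = 1"
| "gegenbauer lam (Suc 0) x = 2 * lam * x"
| "gegenbauer lam (Suc (Suc n)) x =
     (2 * (real n + 1 + lam) * x * gegenbauer lam (Suc n) x
      - (real n + 2 * lam) * gegenbauer lam n x) / (real n + 2)"

end

theory Submission
  imports Defs "HOL-Computational_Algebra.Polynomial"
begin

text \<open>Write f(y - 1 - t) = G(y - t) with deg G \<le> M. By Cauchy's formula for repeated integration,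
  the integral of (y - t)^i C_n(t) over [-1, y] is an (i+1)-fold antiderivative of i! C_n, so it differs
  from i! times the explicit (i+1)-fold antiderivative of C_n built from
  2(n + lam) C_n = C'_(n+1) - C'_(n-1) by a polynomial of degree at most i. As C_k has exact degree k,
  for k > M the coefficient R_(k,n) is therefore a fixed linear combination of the entries (k, n) of the
  powers T^j of the matrix T of integration in the Gegenbauer basis. With
  W = diag((-1)^k / (k + lam)) the matrix W T is symmetric, hence so is every W T^j, which is the
  claimed relation.\<close>

lemma smult_sum_right: "smult c (\<Sum>i\<in>A. f i) = (\<Sum>i\<in>A. smult c (f i))"
  by (induction A rule: infinite_finite_induct) (simp_all add: smult_add_right)

lemma higher_pderiv_diff:
  fixes p q :: "'a::idom poly"
  shows "(pderiv ^^ n) (p - q) = (pderiv ^^ n) p - (pderiv ^^ n) q"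
  by (induction n) (simp_all add: pderiv_diff)

lemma poly_eq_if_eq_on_infinite:
  fixes p q :: "'a::idom poly"
  assumes "infinite A" and "\<And>x. x \<in> A \<Longrightarrow> poly p x = poly q x"
  shows "p = q"
proof (rule ccontr)
  assume "p \<noteq> q"
  then have "finite {x. poly (p - q) x = 0}"
    by (intro poly_roots_finite) simp
  moreover have "A \<subseteq> {x. poly (p - q) x = 0}"
    using assms(2) by auto
  ultimately show False
    using assms(1) finite_subset by blast
qed

lemma degree_le_if_higher_pderiv_eq_0:
  fixes p :: "'a::field_char_0 poly"
  assumes "(pderiv ^^ Suc i) p = 0"
  shows "degree p \<le> i"
proof (rule degree_le, intro allI impI)
  fix n assume "n > i"
  have "pochhammer (of_nat (Suc (n - Suc i))) (Suc i) * coeff p n = (0 :: 'a)"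
    using arg_cong[OF assms, of "\<lambda>p. coeff p (n - Suc i)"] \<open>n > i\<close>
    by (simp only: coeff_higher_pderiv) simp
  moreover have "pochhammer (of_nat (Suc (n - Suc i))) (Suc i) \<noteq> (0 :: 'a)"
    unfolding pochhammer_eq_0_iff
    by (metis add_eq_0_iff_both_eq_0 eq_neg_iff_add_eq_0 of_nat_add of_nat_eq_0_iff nat.distinct(1))
  ultimately show "coeff p n = 0"
    by simp
qed

lemma triangular_combination_coeff_eq_0:
  fixes p :: "nat \<Rightarrow> 'a::idom poly"
  assumes degree_p: "\<And>k. degree (p k) \<le> k" and coeff_p: "\<And>k. coeff (p k) k \<noteq> 0"
    and "degree (\<Sum>k\<le>K. smult (d k) (p k)) \<le> M" and "M < k" and "k \<le> K"
  shows "d k = 0"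
  using assms(3-5)
proof (induction K arbitrary: k)
  case (Suc K)
  have "coeff (p k) (Suc K) = 0" if "k \<le> K" for k
    using degree_p[of k] that by (intro coeff_eq_0) simp
  then have "coeff (\<Sum>k\<le>Suc K. smult (d k) (p k)) (Suc K) = d (Suc K) * coeff (p (Suc K)) (Suc K)"
    by (simp add: coeff_sum)
  moreover have "coeff (\<Sum>k\<le>Suc K. smult (d k) (p k)) (Suc K) = 0"
    using Suc.prems by (intro coeff_eq_0) simp
  ultimately have "d (Suc K) = 0"
    using coeff_p by simp
  with Suc show ?case
    by (cases "k \<le> K") (auto simp: le_Suc_eq)
qed simp

lemma ex_pderiv_eq_poly_eq_0:
  fixes q :: "'a::field_char_0 poly"
  shows "\<exists>Q. pderiv Q = q \<and> poly Q a = 0"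
proof -
  define Q where "Q = (\<Sum>i\<le>degree q. monom (coeff q i / of_nat (Suc i)) (Suc i))"
  have "pderiv Q = (\<Sum>i\<le>degree q. monom (coeff q i) i)"
    by (simp add: Q_def higher_pderiv_sum[of 1, simplified] pderiv_monom del: of_nat_Suc)
  then have "pderiv (Q - [:poly Q a:]) = q"
    by (simp add: pderiv_diff poly_as_sum_of_monoms)
  then show ?thesis
    by (intro exI[of _ "Q - [:poly Q a:]"]) simp
qed

lemma has_integral_poly_pderiv:
  fixes Q :: "real poly"
  assumes "a \<le> b"
  shows "((\<lambda>t. poly (pderiv Q) t) has_integral poly Q b - poly Q a) {a..b}"
proof (rule fundamental_theorem_of_calculus[OF assms])
  show "\<And>x. ((\<lambda>t. poly Q t) has_vector_derivative poly (pderiv Q) x) (at x within {a..b})"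
    by (simp add: has_real_derivative_iff_has_vector_derivative[symmetric] has_field_derivative_at_within)
qed

lemma cauchy_repeated_integral_poly:
  fixes q :: "real poly"
  shows "\<exists>P. (\<forall>y\<ge>a. ((\<lambda>t. (y - t) ^ i * poly q t) has_integral poly P y) {a..y})
           \<and> (pderiv ^^ Suc i) P = smult (fact i) q"
proof (induction i arbitrary: q)
  case 0
  obtain Q where "pderiv Q = q" "poly Q a = 0"
    using ex_pderiv_eq_poly_eq_0 by blast
  then show ?case
    using has_integral_poly_pderiv[of a _ Q] by (intro exI[of _ Q]) simp
next
  case (Suc i)
  obtain Q where Q: "pderiv Q = q" "poly Q a = 0"
    using ex_pderiv_eq_poly_eq_0 by blast
  obtain P
    where P_int: "\<And>y. y \<ge> a \<Longrightarrow> ((\<lambda>t. (y - t) ^ i * poly Q t) has_integral poly P y) {a..y}"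
    and P_deriv: "(pderiv ^^ Suc i) P = smult (fact i) Q"
    using Suc.IH[of Q] by blast
  have "((\<lambda>t. (y - t) ^ Suc i * poly q t) has_integral poly (smult (of_nat (Suc i)) P) y) {a..y}"
    if "y \<ge> a" for y
  proof -
    \<comment> \<open>integration by parts against (y - t)^(i+1); both boundary terms vanish\<close>
    define G where "G = [:y, -1:] ^ Suc i * Q"
    have "poly (pderiv G) t = (y - t) ^ Suc i * poly q t - of_nat (Suc i) * ((y - t) ^ i * poly Q t)" for t
      by (simp add: G_def pderiv_mult pderiv_power_Suc pderiv_pCons Q(1) algebra_simps del: power_Suc)
    moreover have "poly G y - poly G a = 0"
      by (simp add: G_def Q(2))
    ultimately have "((\<lambda>t. (y - t) ^ Suc i * poly q t - of_nat (Suc i) * ((y - t) ^ i * poly Q t))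
        has_integral 0) {a..y}"
      using has_integral_poly_pderiv[OF that, of G] by simp
    from has_integral_add[OF this has_integral_cmult_real[OF P_int[OF that]], of "of_nat (Suc i)"]
    show ?thesis
      by simp
  qed
  moreover have "(pderiv ^^ Suc (Suc i)) (smult (of_nat (Suc i)) P) = smult (fact (Suc i)) q"
    by (simp only: funpow.simps(2)[of "Suc i"] o_apply higher_pderiv_smult P_deriv)
      (simp add: pderiv_smult Q(1))
  ultimately show ?case
    by blast
qed

lemma add_of_nat_neq_0_if_notin_nonpos_Ints:
  fixes lam :: real
  assumes "lam \<notin> \<int>\<^sub>\<le>\<^sub>0"
  shows "real n + lam \<noteq> 0"
  using assms plus_of_nat_eq_0_imp[of lam n] by (auto simp: add.commute)

fun gegenbauer_poly :: "real \<Rightarrow> nat \<Rightarrow> real poly" where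
  "gegenbauer_poly lam 0 = 1"
| "gegenbauer_poly lam (Suc 0) = [:0, 2 * lam:]"
| "gegenbauer_poly lam (Suc (Suc n)) = smult (1 / (real n + 2))
     (smult (2 * (real n + 1 + lam)) (pCons 0 (gegenbauer_poly lam (Suc n)))
      - smult (real n + 2 * lam) (gegenbauer_poly lam n))"

lemma poly_gegenbauer_poly [simp]: "poly (gegenbauer_poly lam n) x = gegenbauer lam n x"
  by (induction lam n rule: gegenbauer_poly.induct) (simp_all add: field_simps)

lemma degree_gegenbauer_poly_le: "degree (gegenbauer_poly lam n) \<le> n"
proof (induction lam n rule: gegenbauer_poly.induct)
  case (3 lam n)
  then show ?case
    by (auto simp del: gegenbauer_poly.simps simp: gegenbauer_poly.simps(3)
        intro!: degree_diff_le order.trans[OF degree_smult_le] order.trans[OF degree_pCons_le])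
qed simp_all

lemma coeff_gegenbauer_poly_self_neq_0:
  assumes "lam \<notin> \<int>\<^sub>\<le>\<^sub>0"
  shows "coeff (gegenbauer_poly lam n) n \<noteq> 0"
  using assms
proof (induction lam n rule: gegenbauer_poly.induct)
  case (3 lam n)
  have "coeff (gegenbauer_poly lam n) (Suc (Suc n)) = 0"
    using degree_gegenbauer_poly_le[of lam n] by (simp add: coeff_eq_0)
  moreover have "real n + 1 + lam \<noteq> 0"
    using add_of_nat_neq_0_if_notin_nonpos_Ints[OF "3.prems", of "Suc n"] by (simp add: add.commute)
  ultimately show ?case
    using 3 by (simp del: mult_eq_0_iff add: mult_eq_0_iff[of 2])
qed auto

lemma pderiv_gegenbauer_poly_recurrence:
  fixes lam x :: real
  defines "C \<equiv> \<lambda>n. gegenbauer lam n x" and "D \<equiv> \<lambda>n. poly (pderiv (gegenbauer_poly lam n)) x"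
  shows "(real n + 2) * D (Suc (Suc n))
           = 2 * (real n + 1 + lam) * (C (Suc n) + x * D (Suc n)) - (real n + 2 * lam) * D n"
  by (simp add: C_def D_def pderiv_smult pderiv_diff pderiv_pCons field_simps)

lemma gegenbauer_pderiv_identities:
  fixes lam x :: real
  defines "C \<equiv> \<lambda>n. gegenbauer lam n x" and "D \<equiv> \<lambda>n. poly (pderiv (gegenbauer_poly lam n)) x"
  shows "x * D (Suc n) - D n = (real n + 1) * C (Suc n)
     \<and> (x\<^sup>2 - 1) * D (Suc n) = (real n + 1) * x * C (Suc n) - (real n + 2 * lam) * C n"
proof (induction n)
  case 0
  show ?case
    by (simp add: C_def D_def pderiv_pCons power2_eq_square algebra_simps)
next
  case (Suc n)
  have rec: "(real n + 2) * C (Suc (Suc n)) = 2 * (real n + 1 + lam) * x * C (Suc n) - (real n + 2 * lam) * C n"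
    by (simp add: C_def field_simps)
  have "(real n + 2) * D (Suc (Suc n)) = (real n + 2) * (x * D (Suc n) + (real n + 1 + 2 * lam) * C (Suc n))"
    using pderiv_gegenbauer_poly_recurrence[of n lam x] Suc.IH unfolding C_def D_def by algebra
  then have "D (Suc (Suc n)) = x * D (Suc n) + (real n + 1 + 2 * lam) * C (Suc n)"
    by simp
  with Suc.IH rec show ?case
    by (simp only: of_nat_Suc) algebra
qed

lemma pderiv_gegenbauer_poly_Suc_Suc_diff:
  "pderiv (gegenbauer_poly lam (Suc (Suc n))) - pderiv (gegenbauer_poly lam n)
     = smult (2 * (real n + 1 + lam)) (gegenbauer_poly lam (Suc n))"
proof (rule poly_eq_if_eq_on_infinite[OF infinite_UNIV_char_0], simp only: poly_diff poly_smult)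
  fix x :: real
  define C where "C = (\<lambda>n. gegenbauer lam n x)"
  define D where "D = (\<lambda>n. poly (pderiv (gegenbauer_poly lam n)) x)"
  have "(real n + 2) * (D (Suc (Suc n)) - D n) = (real n + 2) * (2 * (real n + 1 + lam) * C (Suc n))"
    using pderiv_gegenbauer_poly_recurrence[of n lam x] gegenbauer_pderiv_identities[of x lam n]
    unfolding C_def D_def by algebra
  then show "D (Suc (Suc n)) - D n = 2 * (real n + 1 + lam) * poly (gegenbauer_poly lam (Suc n)) x"
    by (simp add: C_def)
qed

primrec gegenbauer_iterated_antideriv :: "real \<Rightarrow> nat \<Rightarrow> nat \<Rightarrow> real poly" where
  "gegenbauer_iterated_antideriv lam 0 n = gegenbauer_poly lam n"
| "gegenbauer_iterated_antideriv lam (Suc j) n = smult (1 / (2 * (real n + lam)))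
     (gegenbauer_iterated_antideriv lam j (Suc n)
      - (if n = 0 then 0 else gegenbauer_iterated_antideriv lam j (n - 1)))"

lemma pderiv_gegenbauer_iterated_antideriv_1:
  assumes "lam \<notin> \<int>\<^sub>\<le>\<^sub>0"
  shows "pderiv (gegenbauer_iterated_antideriv lam 1 n) = gegenbauer_poly lam n"
proof (cases n)
  case 0
  then show ?thesis
    using add_of_nat_neq_0_if_notin_nonpos_Ints[OF assms, of 0] by (simp add: pderiv_pCons)
next
  case (Suc m)
  then show ?thesis
    using pderiv_gegenbauer_poly_Suc_Suc_diff[of lam m]
      add_of_nat_neq_0_if_notin_nonpos_Ints[OF assms, of "Suc m"]
    by (simp add: pderiv_smult pderiv_diff add_ac del: gegenbauer_poly.simps)
qed

lemma higher_pderiv_gegenbauer_iterated_antideriv: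
  assumes "lam \<notin> \<int>\<^sub>\<le>\<^sub>0"
  shows "(pderiv ^^ j) (gegenbauer_iterated_antideriv lam j n) = gegenbauer_poly lam n"
proof (induction j arbitrary: n)
  case (Suc j)
  have "(pderiv ^^ j) (gegenbauer_iterated_antideriv lam (Suc j) n) = gegenbauer_iterated_antideriv lam 1 n"
    by (simp add: higher_pderiv_smult higher_pderiv_diff Suc.IH del: gegenbauer_poly.simps)
  then show ?case
    using pderiv_gegenbauer_iterated_antideriv_1[OF assms] by (simp only: funpow.simps(2) o_apply)
qed simp

text \<open>Let T be the matrix of integration in the Gegenbauer basis: its column n holds the coefficients
  of the antiderivative (C(n+1) - C(n-1)) / (2(n + lam)) of C(n). Then
  gegenbauer_antideriv_comb maps a row vector u to u T and
  gegenbauer_antideriv_coeffs maps a column vector v to T v.\<close>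

definition gegenbauer_antideriv_comb :: "real \<Rightarrow> (nat \<Rightarrow> real) \<Rightarrow> nat \<Rightarrow> real" where
  "gegenbauer_antideriv_comb lam u n = (u (Suc n) - (if n = 0 then 0 else u (n - 1))) / (2 * (real n + lam))"

definition gegenbauer_antideriv_coeffs :: "real \<Rightarrow> (nat \<Rightarrow> real) \<Rightarrow> nat \<Rightarrow> real" where
  "gegenbauer_antideriv_coeffs lam v k =
     (if k = 0 then 0 else v (k - 1) / (2 * (real k - 1 + lam))) - v (Suc k) / (2 * (real k + 1 + lam))"

lemma gegenbauer_antideriv_comb_coeffs_commute:
  "gegenbauer_antideriv_comb lam (\<lambda>m. gegenbauer_antideriv_coeffs lam (\<lambda>i. g i m) k) n
     = gegenbauer_antideriv_coeffs lam (\<lambda>i. gegenbauer_antideriv_comb lam (g i) n) k"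
  unfolding gegenbauer_antideriv_comb_def gegenbauer_antideriv_coeffs_def
  by (cases "k = 0"; cases "n = 0") (simp_all add: diff_divide_distrib ac_simps)

text \<open>In matrix form: W T = T^t W for W = diag((-1)^k / (k + lam)), i.e. W T is symmetric.\<close>

lemma gegenbauer_antideriv_coeffs_weighted:
  "(-1) ^ k / (real k + lam) * gegenbauer_antideriv_coeffs lam v k
     = gegenbauer_antideriv_comb lam (\<lambda>i. (-1) ^ i / (real i + lam) * v i) k"
proof (cases k)
  case (Suc m)
  have "- s / b * (x / (2 * a) - y / (2 * c)) = (s * y / c - s * x / a) / (2 * b)" for s a b c x y :: real
    by (cases "a = 0"; cases "b = 0"; cases "c = 0") (simp_all add: field_simps)
  from this[of "(-1) ^ m" "real m + 1 + lam" "v m" "real m + lam" "v (Suc (Suc m))" "real m + 2 + lam"]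
  show ?thesis
    unfolding gegenbauer_antideriv_comb_def gegenbauer_antideriv_coeffs_def Suc
    by (simp add: add_ac)
qed (simp add: gegenbauer_antideriv_comb_def gegenbauer_antideriv_coeffs_def field_simps)

primrec gegenbauer_antideriv_coeff :: "real \<Rightarrow> nat \<Rightarrow> nat \<Rightarrow> nat \<Rightarrow> real" where
  "gegenbauer_antideriv_coeff lam 0 k n = (if k = n then 1 else 0)"
| "gegenbauer_antideriv_coeff lam (Suc j) k n =
     gegenbauer_antideriv_comb lam (gegenbauer_antideriv_coeff lam j k) n"

lemma gegenbauer_iterated_antideriv_expansion:
  assumes "n + j \<le> K"
  shows "gegenbauer_iterated_antideriv lam j n
           = (\<Sum>k\<le>K. smult (gegenbauer_antideriv_coeff lam j k n) (gegenbauer_poly lam k))"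
  using assms
proof (induction j arbitrary: n)
  case 0
  then show ?case
    by (simp add: if_distrib[of "\<lambda>c. smult c _"] cong: if_cong)
next
  case (Suc j)
  have "n \<noteq> 0 \<Longrightarrow> n - 1 + j \<le> K"
    using Suc.prems by simp
  then show ?case
    using Suc.IH[of "Suc n"] Suc.IH[of "n - 1"] Suc.prems
    by (simp add: gegenbauer_antideriv_comb_def smult_sum_right smult_diff_left smult_diff_right
        sum_subtractf diff_divide_distrib del: gegenbauer_poly.simps)
qed

lemma gegenbauer_antideriv_coeff_Suc_row:
  "gegenbauer_antideriv_coeff lam (Suc j) k n
     = gegenbauer_antideriv_coeffs lam (\<lambda>i. gegenbauer_antideriv_coeff lam j i n) k"
proof (induction j arbitrary: k n)
  case 0
  then show ?case
    by (auto simp: gegenbauer_antideriv_comb_def gegenbauer_antideriv_coeffs_def add_ac)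
next
  case (Suc j)
  have "gegenbauer_antideriv_coeff lam (Suc j) k
      = (\<lambda>m. gegenbauer_antideriv_coeffs lam (\<lambda>i. gegenbauer_antideriv_coeff lam j i m) k)"
    by (rule ext) (rule Suc.IH)
  then have "gegenbauer_antideriv_coeff lam (Suc (Suc j)) k n
      = gegenbauer_antideriv_comb lam
          (\<lambda>m. gegenbauer_antideriv_coeffs lam (\<lambda>i. gegenbauer_antideriv_coeff lam j i m) k) n"
    by (simp only: gegenbauer_antideriv_coeff.simps(2))
  also have "\<dots> = gegenbauer_antideriv_coeffs lam (\<lambda>i. gegenbauer_antideriv_coeff lam (Suc j) i n) k"
    by (simp add: gegenbauer_antideriv_comb_coeffs_commute)
  finally show ?case .
qed

lemma gegenbauer_antideriv_coeff_weighted_sym: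
  "(-1) ^ k / (real k + lam) * gegenbauer_antideriv_coeff lam j k n
     = (-1) ^ n / (real n + lam) * gegenbauer_antideriv_coeff lam j n k"
proof (induction j arbitrary: k n)
  case (Suc j)
  have "(-1) ^ k / (real k + lam) * gegenbauer_antideriv_coeff lam (Suc j) k n
      = gegenbauer_antideriv_comb lam (\<lambda>i. (-1) ^ i / (real i + lam) * gegenbauer_antideriv_coeff lam j i n) k"
    by (simp only: gegenbauer_antideriv_coeff_Suc_row gegenbauer_antideriv_coeffs_weighted)
  also have "\<dots> = gegenbauer_antideriv_comb lam
      (\<lambda>i. (-1) ^ n / (real n + lam) * gegenbauer_antideriv_coeff lam j n i) k"
    by (simp only: Suc.IH)
  also have "\<dots> = (-1) ^ n / (real n + lam) * gegenbauer_antideriv_coeff lam (Suc j) n k"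
    by (simp add: gegenbauer_antideriv_comb_def right_diff_distrib)
  finally show ?case .
qed simp

lemma gegenbauer_antideriv_coeff_swap:
  assumes "lam \<notin> \<int>\<^sub>\<le>\<^sub>0"
  shows "gegenbauer_antideriv_coeff lam j k n
           = (-1) ^ (k + n) * ((real k + lam) / (real n + lam)) * gegenbauer_antideriv_coeff lam j n k"
proof -
  have "real k + lam \<noteq> 0"
    using add_of_nat_neq_0_if_notin_nonpos_Ints[OF assms] .
  moreover have "(-1) ^ k * (-1) ^ k = (1 :: real)"
    by (simp flip: power_add)
  ultimately have "gegenbauer_antideriv_coeff lam j k n
      = (-1) ^ k * (real k + lam) * ((-1) ^ k / (real k + lam) * gegenbauer_antideriv_coeff lam j k n)"
    by (simp add: field_simps)
  also have "\<dots> = (-1) ^ k * (real k + lam) * ((-1) ^ n / (real n + lam) * gegenbauer_antideriv_coeff lam j n k)"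
    by (simp only: gegenbauer_antideriv_coeff_weighted_sym)
  also have "\<dots> = (-1) ^ (k + n) * ((real k + lam) / (real n + lam)) * gegenbauer_antideriv_coeff lam j n k"
    by (simp add: power_add)
  finally show ?thesis .
qed

lemma convolution_integral_poly:
  fixes G q :: "real poly" and Q :: "nat \<Rightarrow> real poly"
  assumes deg_G: "degree G \<le> M" and Q: "\<And>i. (pderiv ^^ Suc i) (Q i) = q"
  obtains H where "\<And>y. y \<ge> a \<Longrightarrow> ((\<lambda>t. poly G (y - t) * poly q t) has_integral poly H y) {a..y}"
    and "degree (H - (\<Sum>i\<le>M. smult (coeff G i * fact i) (Q i))) \<le> M"
proof -
  have "\<forall>i. \<exists>P. (\<forall>y\<ge>a. ((\<lambda>t. (y - t) ^ i * poly q t) has_integral poly P y) {a..y})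
      \<and> (pderiv ^^ Suc i) P = smult (fact i) q"
    using cauchy_repeated_integral_poly by blast
  then obtain P
    where P_int: "\<And>i y. y \<ge> a \<Longrightarrow> ((\<lambda>t. (y - t) ^ i * poly q t) has_integral poly (P i) y) {a..y}"
    and P_deriv: "\<And>i. (pderiv ^^ Suc i) (P i) = smult (fact i) q"
    by metis
  define H where "H = (\<Sum>i\<le>M. smult (coeff G i) (P i))"
  have poly_G: "poly G z = (\<Sum>i\<le>M. coeff G i * z ^ i)" for z
    unfolding poly_altdef using deg_G by (intro sum.mono_neutral_left) (auto simp: coeff_eq_0)
  have "((\<lambda>t. poly G (y - t) * poly q t) has_integral poly H y) {a..y}" if "y \<ge> a" for y
  proof -
    have "((\<lambda>t. \<Sum>i\<le>M. coeff G i * ((y - t) ^ i * poly q t)) has_integral poly H y) {a..y}"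
      unfolding H_def poly_sum poly_smult using that by (intro has_integral_sum has_integral_cmult_real P_int) auto
    then show ?thesis
      by (simp add: poly_G sum_distrib_right mult.assoc)
  qed
  moreover have "degree (H - (\<Sum>i\<le>M. smult (coeff G i * fact i) (Q i))) \<le> M"
  proof -
    have "H - (\<Sum>i\<le>M. smult (coeff G i * fact i) (Q i))
        = (\<Sum>i\<le>M. smult (coeff G i) (P i - smult (fact i) (Q i)))"
      by (simp add: H_def sum_subtractf smult_diff_right)
    also have "degree \<dots> \<le> M"
    proof (intro degree_sum_le)
      fix i assume "i \<in> {..M}"
      have "(pderiv ^^ Suc i) (P i - smult (fact i) (Q i)) = 0"
        by (simp only: higher_pderiv_diff higher_pderiv_smult P_deriv Q diff_self)
      then have "degree (P i - smult (fact i) (Q i)) \<le> i"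
        by (rule degree_le_if_higher_pderiv_eq_0)
      with \<open>i \<in> {..M}\<close> show "degree (smult (coeff G i) (P i - smult (fact i) (Q i))) \<le> M"
        by (auto intro: order.trans[OF degree_smult_le])
    qed simp
    finally show ?thesis .
  qed
  ultimately show ?thesis
    using that by blast
qed

lemma gegenbauer_convolution_coeff:
  fixes G :: "real poly" and r :: "nat \<Rightarrow> real"
  assumes lam: "lam \<notin> \<int>\<^sub>\<le>\<^sub>0" and "a < b" and deg_G: "degree G \<le> M" and K: "n + M + 1 \<le> K"
    and expansion: "\<And>y. y \<in> {a..b} \<Longrightarrow>
        integral {a..y} (\<lambda>t. poly G (y - t) * gegenbauer lam n t) = (\<Sum>k\<le>K. r k * gegenbauer lam k y)"
    and k: "M < k" "k \<le> K"
  shows "r k = (\<Sum>i\<le>M. coeff G i * fact i * gegenbauer_antideriv_coeff lam (Suc i) k n)"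
proof -
  define c where "c k = (\<Sum>i\<le>M. coeff G i * fact i * gegenbauer_antideriv_coeff lam (Suc i) k n)" for k
  define J where "J = (\<Sum>i\<le>M. smult (coeff G i * fact i) (gegenbauer_iterated_antideriv lam (Suc i) n))"
  have antiderivs: "(pderiv ^^ Suc i) (gegenbauer_iterated_antideriv lam (Suc i) n) = gegenbauer_poly lam n" for i
    using higher_pderiv_gegenbauer_iterated_antideriv[OF lam] .
  obtain H where H_int: "\<And>y. y \<ge> a \<Longrightarrow>
        ((\<lambda>t. poly G (y - t) * poly (gegenbauer_poly lam n) t) has_integral poly H y) {a..y}"
    and "degree (H - J) \<le> M"
    by (rule convolution_integral_poly[OF deg_G antiderivs, where a = a, folded J_def]) (rule that)
  have "(\<Sum>k\<le>K. smult (r k) (gegenbauer_poly lam k)) = H"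
  proof (rule poly_eq_if_eq_on_infinite)
    show "infinite {a..b}"
      using \<open>a < b\<close> by simp
    fix y assume "y \<in> {a..b}"
    then show "poly (\<Sum>k\<le>K. smult (r k) (gegenbauer_poly lam k)) y = poly H y"
      using expansion[of y] H_int[of y] by (simp add: poly_sum integral_unique)
  qed
  moreover have "J = (\<Sum>k\<le>K. smult (c k) (gegenbauer_poly lam k))"
  proof -
    have "J = (\<Sum>i\<le>M. \<Sum>k\<le>K. smult (coeff G i * fact i * gegenbauer_antideriv_coeff lam (Suc i) k n)
        (gegenbauer_poly lam k))"
      unfolding J_def using K
      by (intro sum.cong refl) (simp add: gegenbauer_iterated_antideriv_expansion[of n _ K] smult_sum_right
          del: gegenbauer_iterated_antideriv.simps)
    then show ?thesis
      by (simp add: sum.swap[of _ "{..M}"] c_def smult_sum)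
  qed
  ultimately have "degree (\<Sum>k\<le>K. smult (r k - c k) (gegenbauer_poly lam k)) \<le> M"
    using \<open>degree (H - J) \<le> M\<close> by (simp add: sum_subtractf smult_diff_left)
  then have "r k - c k = 0"
    by (rule triangular_combination_coeff_eq_0[OF degree_gegenbauer_poly_le
          coeff_gegenbauer_poly_self_neq_0[OF lam] _ k])
  then show ?thesis
    by (simp add: c_def)
qed

theorem theorem4p4:
  fixes lam :: real and M N :: nat and a :: "nat \<Rightarrow> real"
    and f :: "real \<Rightarrow> real" and R :: "nat \<Rightarrow> nat \<Rightarrow> real"
  assumes lam_gt: "lam > -1/2" and lam_ne: "lam \<noteq> 0"
    and f_def: "\<And>x. f x = (\<Sum>m\<le>M. a m * gegenbauer lam m x)"
    and R_def: "\<And>n y. n \<le> N \<Longrightarrow> y \<in> {-1..1} \<Longrightarrow>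
        integral {-1..y} (\<lambda>t. f (y - 1 - t) * gegenbauer lam n t)
          = (\<Sum>k\<le>M + N + 1. R k n * gegenbauer lam k y)"
  shows "\<forall>k n. M + 1 \<le> k \<and> k \<le> N \<and> M + 1 \<le> n \<and> n \<le> N \<longrightarrow>
           R k n = (-1) ^ (k + n) * ((real k + lam) / (real n + lam)) * R n k"
proof -
  have lam: "lam \<notin> \<int>\<^sub>\<le>\<^sub>0"
    using lam_gt lam_ne by (auto elim!: nonpos_Ints_cases)
  define G where "G = pcompose (\<Sum>m\<le>M. smult (a m) (gegenbauer_poly lam m)) [:-1, 1:]"
  have "degree G \<le> M"
    unfolding G_def degree_pcompose
    by (auto intro!: degree_sum_le order.trans[OF degree_smult_le] order.trans[OF degree_gegenbauer_poly_le])
  moreover have "f (y - 1 - t) = poly G (y - t)" for y t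
    by (simp add: G_def f_def poly_pcompose poly_sum algebra_simps)
  ultimately have R_coeff: "R k n = (\<Sum>i\<le>M. coeff G i * fact i * gegenbauer_antideriv_coeff lam (Suc i) k n)"
    if "M < k" "k \<le> N" "n \<le> N" for k n
    using gegenbauer_convolution_coeff[OF lam, of "-1" 1 G M n "M + N + 1" "\<lambda>k. R k n" k] R_def that by simp
  show ?thesis
  proof (intro allI impI)
    fix k n assume "M + 1 \<le> k \<and> k \<le> N \<and> M + 1 \<le> n \<and> n \<le> N"
    then show "R k n = (-1) ^ (k + n) * ((real k + lam) / (real n + lam)) * R n k"
      by (simp add: R_coeff sum_distrib_left gegenbauer_antideriv_coeff_swap[OF lam, of _ k n] ac_simps
          del: gegenbauer_antideriv_coeff.simps)
  qed
qed

end
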